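(* Let $p\ge1$, let $m\in\mathbb Z$ with $1\le m\le p$, and let $n\in\mathbb Z_{\ge0}$ with $m\ne n$. Then $[v(-m,n),\det\mathbf V_p]=0$ in $U(\mathcal L_r)$.
   Context: Fix an integer $d\ge 2$ and $r\in\mathbb{C}$. Let $\hat{\mathfrak h}$ be the complex Lie algebra with basis $\{v^i(m)\mid 1\le i\le d,\ m\in\mathbb{Z}\}\cup\{\mathbf c\}$ and bracket $[v^i(m),v^j(n)]=\delta_{m+n,0}\delta_{i,j}\,m\,\mathbf c$, $[\mathbf c,\hat{\mathfrak h}]=0$. In $A=U(\hat{\mathfrak h})/\langle \mathbf c-1\rangle$ let $v^{ij}(m,n)$ be the image of $v^i(m)v^j(n)$; then $v^{ij}(m,n)=v^{ji}(n,m)$ unless $i=j$ and $m=-n$, and $v^{ii}(m,-m)=v^{ii}(-m,m)+m$. Let $\mathcal B=\{v^{ii}(m,n)\mid 1\le i\le d,\ m\le n\}\cup\{v^{ij}(m,n)\mid 1\le i<j\le d,\ m,n\in\mathbb Z\}$; then $\mathcal B\cup\{1\}$ is linearly independent, $\mathcal L:=\mathrm{span}_{\mathbb C}\mathcal B\oplus\mathbb C\subset A$ contains every $v^{ij}(m,n)$ and is closed under $[x,y]=xy-yx$. With $\pi_1,\pi_2$ the projections of $\mathcal L$ onto $\mathrm{span}\,\mathcal B$ and onto $\mathbb C$, $[x,y]_r=\pi_1([x,y])+r\pi_2([x,y])$ is a Lie bracket on $\mathcal L$; call this Lie algebra $\mathcal L_r$; commutators in $U(\mathcal L_r)$ are taken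 with respect to $[\cdot,\cdot]_r$. Write $v(m,n)=v^{11}(m,n)$. The elements $v(-s,-t)$ with $s,t>0$ pairwise commute in $U(\mathcal L_r)$, so the determinant $\det\mathbf V_p=\sum_{\sigma\in\mathfrak S_p}\mathrm{sgn}(\sigma)\prod_{q=1}^p v(-q,-\sigma(q))\in U(\mathcal L_r)$ of the $p\times p$ matrix $\mathbf V_p=(v(-s,-t))_{1\le s,t\le p}$ is well defined. *)

theory Defs
  imports Complex_Main "HOL-Library.Poly_Mapping" "HOL-Combinatorics.Permutations"
begin

(* Basis of L: generators V i j m n stand for v^{ij}(m,n) (canonical forms only,
   see valid_gen); K stands for the basis vector 1 of the summand C of L. *)
datatype gen = V nat nat int int | K

definition valid_gen :: "nat \<Rightarrow> gen \<Rightarrow> bool" where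
  "valid_gen d g = (case g of
      V i j m n \<Rightarrow> 1 \<le> i \<and> i \<le> d \<and> 1 \<le> j \<and> j \<le> d \<and> (i < j \<or> (i = j \<and> m \<le> n))
    | K \<Rightarrow> True)"

type_synonym Lelem = "gen \<Rightarrow>\<^sub>0 complex"

definition sc :: "complex \<Rightarrow> ('a \<Rightarrow>\<^sub>0 complex) \<Rightarrow> ('a \<Rightarrow>\<^sub>0 complex)" where
  "sc a x = Poly_Mapping.map (\<lambda>c. a * c) x"

(* v^{ij}(m,n) written in the basis B \<union> {1} of L *)
definition vL :: "nat \<Rightarrow> nat \<Rightarrow> int \<Rightarrow> int \<Rightarrow> Lelem" where
  "vL i j m n =
     (if i < j then Poly_Mapping.single (V i j m n) 1
      else if j < i then Poly_Mapping.single (V j i n m) 1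
      else if m \<le> n then Poly_Mapping.single (V i i m n) 1
      else if m = - n then Poly_Mapping.single (V i i n m) 1 + Poly_Mapping.single K (of_int m)
      else Poly_Mapping.single (V i i n m) 1)"

(* commutator xy - yx in A of two basis elements, expressed in the basis of L
   (K = the unit 1 of A); obtained from [ab,cd] = [b,c]ad + [b,d]ac + [a,c]db + [a,d]cb *)
fun brA :: "gen \<Rightarrow> gen \<Rightarrow> Lelem" where
  "brA (V i j m n) (V k l p q) =
      sc (if j = k \<and> n + p = 0 then of_int n else 0) (vL i l m q)
    + sc (if j = l \<and> n + q = 0 then of_int n else 0) (vL i k m p)
    + sc (if i = k \<and> m + p = 0 then of_int m else 0) (vL l j q n)
    + sc (if i = l \<and> m + q = 0 then of_int m else 0) (vL k j p n)"
| "brA _ _ = 0"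

(* the bracket [x,y]_r = \<pi>1([x,y]) + r \<pi>2([x,y]) of L_r on basis elements *)
definition brL :: "complex \<Rightarrow> gen \<Rightarrow> gen \<Rightarrow> Lelem" where
  "brL r g h = Poly_Mapping.update K (r * Poly_Mapping.lookup (brA g h) K) (brA g h)"

datatype 'a word = Wd "'a list"

instantiation word :: (type) monoid_add
begin
definition zero_word_def: "0 = Wd []"
fun plus_word :: "'a word \<Rightarrow> 'a word \<Rightarrow> 'a word" where
  "plus_word (Wd xs) (Wd ys) = Wd (xs @ ys)"
instance
proof
  fix a b c :: "'a word"
  show "a + b + c = a + (b + c)" by (cases a; cases b; cases c) auto
  show "0 + a = a" by (cases a) (auto simp: zero_word_def)
  show "a + 0 = a" by (cases a) (auto simp: zero_word_def)
qed
end

(* tensor algebra T(L) over C: finitely supported functions on words in the basis *)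
type_synonym Telem = "gen word \<Rightarrow>\<^sub>0 complex"

definition gT :: "gen \<Rightarrow> Telem" where
  "gT g = Poly_Mapping.single (Wd [g]) 1"

definition emb :: "Lelem \<Rightarrow> Telem" where
  "emb x = (\<Sum>g\<in>Poly_Mapping.keys x. Poly_Mapping.single (Wd [g]) (Poly_Mapping.lookup x g))"

(* defining relations of U(L_r) = T(L)/I; generators outside the basis of L are killed *)
definition Urels :: "nat \<Rightarrow> complex \<Rightarrow> Telem set" where
  "Urels d r = {gT g * gT h - gT h * gT g - emb (brL r g h) | g h. valid_gen d g \<and> valid_gen d h}
               \<union> {gT g | g. \<not> valid_gen d g}"

inductive_set Uideal :: "nat \<Rightarrow> complex \<Rightarrow> Telem set" for d r where
  zero: "0 \<in> Uideal d r"
| gen: "x \<in> Urels d r \<Longrightarrow> a * x * b \<in> Uideal d r"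
| add: "x \<in> Uideal d r \<Longrightarrow> y \<in> Uideal d r \<Longrightarrow> x + y \<in> Uideal d r"

definition vT :: "int \<Rightarrow> int \<Rightarrow> Telem" where
  "vT m n = emb (vL 1 1 m n)"

definition detV :: "nat \<Rightarrow> Telem" where
  "detV p = (\<Sum>\<sigma> \<in> {\<sigma>. \<sigma> permutes {1..p}}.
      of_int (sign \<sigma>) * prod_list (map (\<lambda>q. vT (- int q) (- int (\<sigma> q))) [1..<p+1]))"

end

theory Submission
  imports Defs
begin

(* Modulo the defining ideal of U(L_r) the entries v(-q,-k) of V_p commute with each other, and
   [v(-m,n), v(-q,-k)] = n (\<delta>(q,n) v(-m,-k) + \<delta>(k,n) v(-m,-q)).  As ad v(-m,n) is a derivation,
   [v(-m,n), det V_p] is n times the sum of two determinants: that of V_p with row n replaced by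
   row m, and that of V_p with column n replaced by column m (both are absent unless 1 \<le> n \<le> p).
   Since m \<noteq> n the first has two equal rows and the second two equal columns, so both vanish;
   for equal rows this needs the entries to commute. *)

locale two_sided_ideal =
  fixes J :: "'a::ring_1 set"
  assumes zero_mem: "0 \<in> J"
    and add_mem: "x \<in> J \<Longrightarrow> y \<in> J \<Longrightarrow> x + y \<in> J"
    and mult_left_mem: "x \<in> J \<Longrightarrow> a * x \<in> J"
    and mult_right_mem: "x \<in> J \<Longrightarrow> x * a \<in> J"
begin

definition modeq :: "'a \<Rightarrow> 'a \<Rightarrow> bool" (infix "\<approx>" 50) where
  "x \<approx> y \<longleftrightarrow> x - y \<in> J"

lemma uminus_mem: "x \<in> J \<Longrightarrow> - x \<in> J"
  using mult_left_mem[of x "- 1"] by simp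

lemma modeq_refl [simp]: "x \<approx> x"
  by (simp add: modeq_def zero_mem)

lemma modeq_sym: "x \<approx> y \<Longrightarrow> y \<approx> x"
  using uminus_mem[of "x - y"] by (simp add: modeq_def)

lemma modeq_trans [trans]: "x \<approx> y \<Longrightarrow> y \<approx> z \<Longrightarrow> x \<approx> z"
  using add_mem[of "x - y" "y - z"] by (simp add: modeq_def)

(* Without these, calculations mixing = and \<approx> fall back to higher-order substitution. *)
lemma eq_modeq_trans [trans]: "x = y \<Longrightarrow> y \<approx> z \<Longrightarrow> x \<approx> z"
  and modeq_eq_trans [trans]: "x \<approx> y \<Longrightarrow> y = z \<Longrightarrow> x \<approx> z"
  by simp_all

lemma modeq_add: "x \<approx> y \<Longrightarrow> x' \<approx> y' \<Longrightarrow> x + x' \<approx> y + y'"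
  using add_mem[of "x - y" "x' - y'"] by (simp add: modeq_def algebra_simps)

lemma modeq_uminus: "x \<approx> y \<Longrightarrow> - x \<approx> - y"
  using uminus_mem[of "x - y"] by (simp add: modeq_def)

lemma modeq_mult: "x \<approx> y \<Longrightarrow> x' \<approx> y' \<Longrightarrow> x * x' \<approx> y * y'"
proof -
  assume "x \<approx> y" "x' \<approx> y'"
  then have "(x - y) * x' + y * (x' - y') \<in> J"
    unfolding modeq_def by (intro add_mem mult_left_mem mult_right_mem)
  then show ?thesis
    by (simp add: modeq_def algebra_simps)
qed

lemma modeq_sum: "(\<And>i. i \<in> S \<Longrightarrow> f i \<approx> g i) \<Longrightarrow> sum f S \<approx> sum g S"
  by (induction S rule: infinite_finite_induct) (auto intro: modeq_add)

lemma prod_list_commute_modeq: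
  assumes "\<And>u. u \<in> set us \<Longrightarrow> u * y \<approx> y * u"
  shows "prod_list us * y \<approx> y * prod_list us"
  using assms
proof (induction us)
  case Nil
  then show ?case by simp
next
  case (Cons u us)
  have "prod_list (u # us) * y = u * (prod_list us * y)"
    by (simp add: mult.assoc)
  also have "\<dots> \<approx> u * (y * prod_list us)"
    using Cons by (simp add: modeq_mult)
  also have "\<dots> = (u * y) * prod_list us"
    by (simp add: mult.assoc)
  also have "\<dots> \<approx> (y * u) * prod_list us"
    using Cons.prems by (simp add: modeq_mult)
  finally show ?case
    by (simp add: mult.assoc)
qed

lemma prod_list_perm_modeq:
  assumes "mset xs = mset ys"
    and "\<And>u v. u \<in> set xs \<Longrightarrow> v \<in> set xs \<Longrightarrow> u * v \<approx> v * u"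
  shows "prod_list xs \<approx> prod_list ys"
  using assms
proof (induction xs arbitrary: ys)
  case Nil
  then show ?case by simp
next
  case (Cons x xs)
  then obtain ys1 ys2 where ys: "ys = ys1 @ x # ys2"
    by (metis list.set_intros(1) set_mset_mset split_list)
  have "set ys1 \<subseteq> set (x # xs)"
    using mset_eq_setD[OF Cons.prems(1)] ys by auto
  then have swap: "prod_list ys1 * x \<approx> x * prod_list ys1"
    using Cons.prems(2) by (intro prod_list_commute_modeq) auto
  have "prod_list xs \<approx> prod_list (ys1 @ ys2)"
    using Cons.prems ys by (intro Cons.IH) auto
  then have "prod_list (x # xs) \<approx> x * prod_list (ys1 @ ys2)"
    by (simp add: modeq_mult)
  also have "\<dots> = (x * prod_list ys1) * prod_list ys2"
    by (simp add: mult.assoc)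
  also have "\<dots> \<approx> (prod_list ys1 * x) * prod_list ys2"
    using swap by (simp add: modeq_sym modeq_mult)
  finally show ?case
    by (simp add: ys mult.assoc)
qed

(* Pairing even with odd permutations, rather than showing that the sum equals its negative,
   avoids dividing by 2. *)
lemma signed_sum_permutations_cancel:
  assumes "finite S"
    and g_permutes: "\<And>\<sigma>. \<sigma> permutes S \<Longrightarrow> g \<sigma> permutes S"
    and g_involution: "\<And>\<sigma>. \<sigma> permutes S \<Longrightarrow> g (g \<sigma>) = \<sigma>"
    and sign_g: "\<And>\<sigma>. \<sigma> permutes S \<Longrightarrow> sign (g \<sigma>) = - sign \<sigma>"
    and h_g: "\<And>\<sigma>. \<sigma> permutes S \<Longrightarrow> h (g \<sigma>) \<approx> h \<sigma>"
  shows "(\<Sum>\<sigma> | \<sigma> permutes S. of_int (sign \<sigma>) * h \<sigma>) \<approx> 0"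
proof -
  define f where "f \<sigma> = of_int (sign \<sigma>) * h \<sigma>" for \<sigma>
  define P where "P = {\<sigma>. \<sigma> permutes S}"
  define E where "E = {\<sigma> \<in> P. sign \<sigma> = 1}"
  have sign_odd: "sign \<sigma> = - 1" if "\<sigma> \<notin> E" "\<sigma> \<in> P" for \<sigma>
    using that by (cases \<sigma> rule: sign_cases) (auto simp: E_def)
  have "sum f (P - E) = sum (f \<circ> g) E"
  proof (rule sum.reindex_bij_witness[where i = g and j = g])
    fix \<sigma> assume "\<sigma> \<in> P - E"
    then show "g (g \<sigma>) = \<sigma>" "g \<sigma> \<in> E" "(f \<circ> g) (g \<sigma>) = f \<sigma>"
      using sign_odd[of \<sigma>] by (auto simp: P_def E_def g_permutes g_involution sign_g)
  next
    fix \<sigma> assume "\<sigma> \<in> E"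
    then show "g (g \<sigma>) = \<sigma>" "g \<sigma> \<in> P - E"
      by (auto simp: P_def E_def g_permutes g_involution sign_g)
  qed
  also have "\<dots> \<approx> sum (\<lambda>\<sigma>. - f \<sigma>) E"
  proof (rule modeq_sum)
    fix \<sigma> assume "\<sigma> \<in> E"
    then have "\<sigma> permutes S" by (simp add: E_def P_def)
    then have "of_int (sign \<sigma>) * h (g \<sigma>) \<approx> of_int (sign \<sigma>) * h \<sigma>"
      by (simp add: h_g modeq_mult)
    then show "(f \<circ> g) \<sigma> \<approx> - f \<sigma>"
      using \<open>\<sigma> permutes S\<close> by (simp add: f_def sign_g modeq_uminus)
  qed
  finally have "sum f E + sum f (P - E) \<approx> sum f E + - sum f E"
    by (intro modeq_add modeq_refl) (simp add: sum_negf)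
  moreover have "sum f P = sum f E + sum f (P - E)"
  proof -
    have "finite P" "E \<subseteq> P"
      using finite_permutations[OF assms(1)] by (auto simp: P_def E_def)
    then show ?thesis
      by (simp add: sum.subset_diff add.commute)
  qed
  ultimately show ?thesis
    by (simp add: f_def P_def)
qed

end

(* Over a noncommutative ring the factors of each term are multiplied in row order, as in det V_p. *)
definition row_det_term :: "nat \<Rightarrow> (nat \<Rightarrow> nat \<Rightarrow> 'a::monoid_mult) \<Rightarrow> (nat \<Rightarrow> nat) \<Rightarrow> 'a" where
  "row_det_term p G \<sigma> = prod_list (map (\<lambda>q. G q (\<sigma> q)) [1..<p+1])"

definition row_det :: "nat \<Rightarrow> (nat \<Rightarrow> nat \<Rightarrow> 'a::ring_1) \<Rightarrow> 'a" where
  "row_det p G = (\<Sum>\<sigma> | \<sigma> permutes {1..p}. of_int (sign \<sigma>) * row_det_term p G \<sigma>)"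

lemma row_det_equal_columns:
  fixes G :: "nat \<Rightarrow> nat \<Rightarrow> 'a::ring_1"
  assumes "a \<in> {1..p}" "b \<in> {1..p}" "a \<noteq> b" and "\<And>q. G q a = G q b"
  shows "row_det p G = 0"
proof -
  interpret exact: two_sided_ideal "{0 :: 'a}" \<comment> \<open>congruence modulo 0 is equality\<close>
    by unfold_locales simp_all
  let ?t = "transpose a b"
  have t: "?t permutes {1..p}"
    using assms by (simp add: permutes_swap_id)
  have "exact.modeq (row_det p G) 0"
    unfolding row_det_def
  proof (rule exact.signed_sum_permutations_cancel[where g = "\<lambda>\<sigma>. ?t \<circ> \<sigma>"])
    fix \<sigma> assume \<sigma>: "\<sigma> permutes {1..p}"
    show "?t \<circ> \<sigma> permutes {1..p}"
      using permutes_compose[OF \<sigma> t] .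
    show "?t \<circ> (?t \<circ> \<sigma>) = \<sigma>"
      by (simp add: fun_eq_iff)
    show "sign (?t \<circ> \<sigma>) = - sign \<sigma>"
      using assms(3) permutes_imp_permutation[OF _ t] permutes_imp_permutation[OF _ \<sigma>]
      by (simp add: sign_compose sign_swap_id)
    have "G q (?t (\<sigma> q)) = G q (\<sigma> q)" for q
      using assms(4)[of q] by (auto simp: transpose_def)
    then show "exact.modeq (row_det_term p G (?t \<circ> \<sigma>)) (row_det_term p G \<sigma>)"
      by (simp add: row_det_term_def)
  qed simp
  then show ?thesis
    by (simp add: exact.modeq_def)
qed

lemma commutator_prod_list_map:
  fixes f :: "'b \<Rightarrow> 'a::ring_1"
  assumes "distinct qs"
  shows "x * prod_list (map f qs) - prod_list (map f qs) * x
       = (\<Sum>q\<in>set qs. prod_list (map (f(q := x * f q - f q * x)) qs))"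
  using assms
proof (induction qs)
  case Nil
  then show ?case by simp
next
  case (Cons q qs)
  let ?D = "\<lambda>q. x * f q - f q * x"
  have q: "q \<notin> set qs"
    using Cons.prems by simp
  have IH: "x * prod_list (map f qs) - prod_list (map f qs) * x
      = (\<Sum>q'\<in>set qs. prod_list (map (f(q' := ?D q')) qs))"
    using Cons.prems by (intro Cons.IH) simp
  have other: "f q * prod_list (map (f(q' := y)) qs) = prod_list (map (f(q' := y)) (q # qs))"
    if "q' \<in> set qs" for q' y
    using q that by auto
  have "x * prod_list (map f (q # qs)) - prod_list (map f (q # qs)) * x
      = ?D q * prod_list (map f qs) + f q * (x * prod_list (map f qs) - prod_list (map f qs) * x)"
    by (simp add: algebra_simps)
  also have "?D q * prod_list (map f qs) = prod_list (map (f(q := ?D q)) (q # qs))"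
    using q by simp
  also have "f q * (x * prod_list (map f qs) - prod_list (map f qs) * x)
      = (\<Sum>q'\<in>set qs. prod_list (map (f(q' := ?D q')) (q # qs)))"
    unfolding IH sum_distrib_left by (rule sum.cong[OF refl other])
  finally show ?case
    using q by (simp only: list.set sum.insert[OF finite_set q])
qed

lemma prod_list_map_fun_upd:
  assumes "distinct qs" "q \<in> set qs"
  obtains u v where "\<And>y. prod_list (map (f(q := y)) qs) = u * y * v"
proof -
  obtain qs1 qs2 where qs: "qs = qs1 @ q # qs2"
    using split_list[OF assms(2)] by blast
  with assms(1) have "q \<notin> set qs1" "q \<notin> set qs2"
    by auto
  then have "prod_list (map (f(q := y)) qs) = prod_list (map f qs1) * y * prod_list (map f qs2)" for y
    by (simp add: qs mult.assoc)
  then show thesis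
    by (rule that)
qed

context two_sided_ideal
begin

lemma row_det_equal_rows:
  assumes "a \<in> {1..p}" "b \<in> {1..p}" "a \<noteq> b" and "G a = G b"
    and commute: "\<And>q k q' k'. \<lbrakk>q \<in> {1..p}; k \<in> {1..p}; q' \<in> {1..p}; k' \<in> {1..p}\<rbrakk> \<Longrightarrow>
      G q k * G q' k' \<approx> G q' k' * G q k"
  shows "row_det p G \<approx> 0"
  unfolding row_det_def
proof (rule signed_sum_permutations_cancel[where g = "\<lambda>\<sigma>. \<sigma> \<circ> transpose a b"])
  let ?t = "transpose a b" and ?qs = "[1..<p+1]"
  have t: "?t permutes {1..p}"
    using assms by (simp add: permutes_swap_id)
  fix \<sigma> assume \<sigma>: "\<sigma> permutes {1..p}"
  show "\<sigma> \<circ> ?t permutes {1..p}"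
    using permutes_compose[OF t \<sigma>] .
  show "\<sigma> \<circ> ?t \<circ> ?t = \<sigma>"
    by (simp add: fun_eq_iff)
  show "sign (\<sigma> \<circ> ?t) = - sign \<sigma>"
    using assms(3) permutes_imp_permutation[OF _ t] permutes_imp_permutation[OF _ \<sigma>]
    by (simp add: sign_compose sign_swap_id)
  define f where "f = (\<lambda>q. G q (\<sigma> q))"
  have "G (?t q) = G q" for q
    using assms(4) by (auto simp: transpose_def)
  then have map_eq: "map (\<lambda>q. G q ((\<sigma> \<circ> ?t) q)) ?qs = map (f \<circ> ?t) ?qs"
    by (simp add: f_def)
  have mset: "mset (map (f \<circ> ?t) ?qs) = mset (map f ?qs)"
  proof -
    have "mset ?qs = mset_set {1..p}"
      by (simp only: mset_upt Suc_eq_plus1[symmetric] atLeastLessThanSuc_atLeastAtMost)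
    then show ?thesis
      using permutes_image_mset[OF t] by (simp flip: image_mset.compositionality)
  qed
  have "prod_list (map (f \<circ> ?t) ?qs) \<approx> prod_list (map f ?qs)"
  proof (rule prod_list_perm_modeq[OF mset])
    have "set ?qs = {1..p}"
      by auto
    moreover fix u v assume "u \<in> set (map (f \<circ> ?t) ?qs)" "v \<in> set (map (f \<circ> ?t) ?qs)"
    ultimately obtain q q' where "q \<in> {1..p}" "q' \<in> {1..p}" "u = f (?t q)" "v = f (?t q')"
      by auto
    then show "u * v \<approx> v * u"
      using permutes_in_image[OF t] permutes_in_image[OF \<sigma>] by (simp add: f_def commute)
  qed
  then show "row_det_term p G (\<sigma> \<circ> ?t) \<approx> row_det_term p G \<sigma>"
    by (simp only: row_det_term_def map_eq f_def[symmetric])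
qed simp

lemma commutator_row_det_term:
  assumes central: "\<And>y. c * y = y * c"
    and \<sigma>: "\<sigma> permutes {1..p}"
    and bracket: "\<And>q k. \<lbrakk>q \<in> {1..p}; k \<in> {1..p}\<rbrakk> \<Longrightarrow>
      x * G q k - G q k * x \<approx> c * ((if q = a then G b k else 0) + (if k = a then G q b else 0))"
  shows "x * row_det_term p G \<sigma> - row_det_term p G \<sigma> * x \<approx>
    c * (if a \<in> {1..p} then row_det_term p (G(a := G b)) \<sigma> + row_det_term p (\<lambda>q. (G q)(a := G q b)) \<sigma> else 0)"
proof -
  let ?qs = "[1..<p+1]"
  define f where "f = (\<lambda>q. G q (\<sigma> q))"
  let ?R = "row_det_term p (G(a := G b)) \<sigma>"
  let ?C = "row_det_term p (\<lambda>q. (G q)(a := G q b)) \<sigma>"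
  have set_qs: "set ?qs = {1..p}"
    by auto
  have slot: "prod_list (map (f(q := x * f q - f q * x)) ?qs)
      \<approx> c * ((if q = a then ?R else 0) + (if \<sigma> q = a then ?C else 0))" if q: "q \<in> {1..p}" for q
  proof -
    have "q \<in> set ?qs"
      using q set_qs by blast
    then obtain u v where uv: "\<And>y. prod_list (map (f(q := y)) ?qs) = u * y * v"
      using prod_list_map_fun_upd[OF distinct_upt] by blast
    have R: "?R = u * G b (\<sigma> q) * v" if "q = a"
      unfolding row_det_term_def uv[symmetric] using that
      by (intro arg_cong[where f = prod_list] map_cong) (auto simp: f_def)
    have C: "?C = u * G q b * v" if "\<sigma> q = a"
      unfolding row_det_term_def uv[symmetric] using that permutes_inj[OF \<sigma>]
      by (intro arg_cong[where f = prod_list] map_cong) (auto simp: f_def dest: injD)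
    have "u * (x * f q - f q * x) * v
        \<approx> u * (c * ((if q = a then G b (\<sigma> q) else 0) + (if \<sigma> q = a then G q b else 0))) * v"
      using bracket q permutes_in_image[OF \<sigma>] by (simp add: f_def modeq_mult)
    also have "\<dots> = c * ((if q = a then u * G b (\<sigma> q) * v else 0) + (if \<sigma> q = a then u * G q b * v else 0))"
    proof -
      have "u * (c * y) = c * (u * y)" for y
        by (metis central mult.assoc)
      then show ?thesis
        by (simp add: distrib_left distrib_right mult.assoc)
    qed
    finally show ?thesis
      unfolding uv using R C by (cases "q = a"; cases "\<sigma> q = a") simp_all
  qed
  have column_sum: "(\<Sum>q\<in>{1..p}. if \<sigma> q = a then ?C else 0) = (\<Sum>k\<in>{1..p}. if k = a then ?C else 0)"
    using sum.permute[OF \<sigma>, of "\<lambda>k. if k = a then ?C else 0"] by (simp add: comp_def)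
  have "x * row_det_term p G \<sigma> - row_det_term p G \<sigma> * x
      = (\<Sum>q\<in>{1..p}. prod_list (map (f(q := x * f q - f q * x)) ?qs))"
    using commutator_prod_list_map[of ?qs x f] by (simp only: row_det_term_def f_def set_qs distinct_upt)
  also have "\<dots> \<approx> (\<Sum>q\<in>{1..p}. c * ((if q = a then ?R else 0) + (if \<sigma> q = a then ?C else 0)))"
    by (rule modeq_sum) (rule slot)
  also have "\<dots> = c * ((\<Sum>q\<in>{1..p}. if q = a then ?R else 0) + (\<Sum>q\<in>{1..p}. if \<sigma> q = a then ?C else 0))"
    by (simp only: sum.distrib[symmetric] sum_distrib_left)
  also have "\<dots> = c * (if a \<in> {1..p} then ?R + ?C else 0)"
    unfolding column_sum by simp
  finally show ?thesis .
qed

lemma commutator_row_det: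
  assumes central: "\<And>y. c * y = y * c"
    and bracket: "\<And>q k. \<lbrakk>q \<in> {1..p}; k \<in> {1..p}\<rbrakk> \<Longrightarrow>
      x * G q k - G q k * x \<approx> c * ((if q = a then G b k else 0) + (if k = a then G q b else 0))"
  shows "x * row_det p G - row_det p G * x \<approx>
    c * (if a \<in> {1..p} then row_det p (G(a := G b)) + row_det p (\<lambda>q. (G q)(a := G q b)) else 0)"
proof -
  let ?P = "{\<sigma>. \<sigma> permutes {1..p}}"
  let ?R = "\<lambda>\<sigma>. row_det_term p (G(a := G b)) \<sigma>"
  let ?C = "\<lambda>\<sigma>. row_det_term p (\<lambda>q. (G q)(a := G q b)) \<sigma>"
  have pull_int: "y * (of_int k * z) = of_int k * (y * z)" for y z and k :: int
    by (metis mult.assoc mult_of_int_commute)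
  have pull_c: "y * (c * z) = c * (y * z)" for y z
    by (metis central mult.assoc)
  have "x * row_det p G - row_det p G * x
      = (\<Sum>\<sigma>\<in>?P. of_int (sign \<sigma>) * (x * row_det_term p G \<sigma> - row_det_term p G \<sigma> * x))"
    by (simp add: row_det_def sum_distrib_left sum_distrib_right sum_subtractf right_diff_distrib
        pull_int mult.assoc)
  also have "\<dots> \<approx> (\<Sum>\<sigma>\<in>?P. of_int (sign \<sigma>) * (c * (if a \<in> {1..p} then ?R \<sigma> + ?C \<sigma> else 0)))"
    by (intro modeq_sum modeq_mult modeq_refl commutator_row_det_term[OF central _ bracket]) simp_all
  also have "\<dots> = c * (if a \<in> {1..p} then row_det p (G(a := G b)) + row_det p (\<lambda>q. (G q)(a := G q b)) else 0)"
    by (cases "a \<in> {1..p}") (simp_all add: row_det_def pull_c sum_distrib_left sum.distrib distrib_left del: atLeastAtMost_iff)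
  finally show ?thesis .
qed

lemma row_det_commute_modeq:
  assumes central: "\<And>y. c * y = y * c"
    and bracket: "\<And>q k. \<lbrakk>q \<in> {1..p}; k \<in> {1..p}\<rbrakk> \<Longrightarrow>
      x * G q k - G q k * x \<approx> c * ((if q = a then G b k else 0) + (if k = a then G q b else 0))"
    and commute: "\<And>q k q' k'. \<lbrakk>q \<in> {1..p}; k \<in> {1..p}; q' \<in> {1..p}; k' \<in> {1..p}\<rbrakk> \<Longrightarrow>
      G q k * G q' k' \<approx> G q' k' * G q k"
    and "b \<in> {1..p}" "a \<noteq> b"
  shows "x * row_det p G \<approx> row_det p G * x"
proof -
  have "x * row_det p G - row_det p G * x
      \<approx> c * (if a \<in> {1..p} then row_det p (G(a := G b)) + row_det p (\<lambda>q. (G q)(a := G q b)) else 0)"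
    using central bracket by (rule commutator_row_det)
  also have "\<dots> \<approx> c * 0"
  proof (cases "a \<in> {1..p}")
    case True
    have "row_det p (G(a := G b)) \<approx> 0"
      using True assms(4,5) commute by (intro row_det_equal_rows[of a p b]) auto
    moreover have "row_det p (\<lambda>q. (G q)(a := G q b)) = 0"
      using True assms(4,5) by (intro row_det_equal_columns[of a p b]) auto
    ultimately have "row_det p (G(a := G b)) + row_det p (\<lambda>q. (G q)(a := G q b)) \<approx> 0"
      by simp
    with True show ?thesis
      by (intro modeq_mult modeq_refl) simp
  qed (simp del: atLeastAtMost_iff)
  finally show ?thesis
    by (simp add: modeq_def)
qed

end

lemma Uideal_mult_left: "x \<in> Uideal d r \<Longrightarrow> y * x \<in> Uideal d r"
proof (induction rule: Uideal.induct)
  case (gen x a b)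
  then show ?case
    using Uideal.gen[OF gen, of "y * a" b] by (simp add: mult.assoc)
qed (auto simp: distrib_left intro: Uideal.intros)

lemma Uideal_mult_right: "x \<in> Uideal d r \<Longrightarrow> x * y \<in> Uideal d r"
proof (induction rule: Uideal.induct)
  case (gen x a b)
  then show ?case
    using Uideal.gen[OF gen, of a "b * y"] by (simp add: mult.assoc)
qed (auto simp: distrib_right intro: Uideal.intros)

(* Fixes the parameters of U(L_r) so that congruence modulo its defining ideal can be written \<approx>. *)
locale enveloping_algebra =
  fixes d :: nat and r :: complex

sublocale enveloping_algebra \<subseteq> two_sided_ideal "Uideal d r"
  by unfold_locales (auto intro: Uideal.intros Uideal_mult_left Uideal_mult_right)

lemma emb_eq_sum:
  assumes "finite S" "Poly_Mapping.keys x \<subseteq> S"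
  shows "emb x = (\<Sum>g\<in>S. Poly_Mapping.single (Wd [g]) (Poly_Mapping.lookup x g))"
  unfolding emb_def using assms by (intro sum.mono_neutral_left) (auto simp: in_keys_iff)

lemma emb_add: "emb (x + y) = emb x + emb y"
proof -
  let ?S = "Poly_Mapping.keys x \<union> Poly_Mapping.keys y"
  have "finite ?S" "Poly_Mapping.keys (x + y) \<subseteq> ?S"
    using keys_add[of x y] by auto
  then show ?thesis
    using emb_eq_sum[of ?S] by (simp add: lookup_add single_add sum.distrib)
qed

lemma lookup_sc: "Poly_Mapping.lookup (sc c x) g = c * Poly_Mapping.lookup x g"
  unfolding sc_def by (simp add: map.rep_eq when_def)

lemma sc_0: "sc 0 x = 0"
  by (rule poly_mapping_eqI) (simp add: lookup_sc)

lemma emb_sc: "emb (sc c x) = Poly_Mapping.single 0 c * emb x"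
proof -
  have "Poly_Mapping.keys (sc c x) \<subseteq> Poly_Mapping.keys x"
    by (auto simp: in_keys_iff lookup_sc)
  then have "emb (sc c x) = (\<Sum>g\<in>Poly_Mapping.keys x. Poly_Mapping.single (Wd [g]) (Poly_Mapping.lookup (sc c x) g))"
    by (intro emb_eq_sum) auto
  also have "\<dots> = Poly_Mapping.single 0 c * emb x"
    by (simp add: emb_def lookup_sc mult_single sum_distrib_left)
  finally show ?thesis .
qed

lemma brL_eq_brA: "Poly_Mapping.lookup (brA g h) K = 0 \<Longrightarrow> brL r g h = brA g h"
  unfolding brL_def by (rule poly_mapping_eqI) (simp add: lookup_update)

lemma vT_commute: "a + b \<noteq> 0 \<Longrightarrow> vT a b = vT b a"
  unfolding vT_def vL_def by auto

lemma vT_gT: "a \<le> b \<Longrightarrow> vT a b = gT (V 1 1 a b)"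
  unfolding vT_def vL_def gT_def emb_def by simp

lemma vT_negative: "a < 0 \<Longrightarrow> b < 0 \<Longrightarrow> vT a b = gT (V 1 1 (min a b) (max a b))"
  by (cases "a \<le> b") (simp_all add: vT_gT vT_commute[of a b])

lemma lookup_vL_K: "a < 0 \<Longrightarrow> b < 0 \<Longrightarrow> Poly_Mapping.lookup (vL 1 1 a b) K = 0"
  unfolding vL_def by (simp add: lookup_single)

context enveloping_algebra
begin

notation modeq (infix "\<approx>" 50)

lemma bracket_relation:
  assumes "valid_gen d g" "valid_gen d h"
  shows "gT g * gT h - gT h * gT g \<approx> emb (brL r g h)"
proof -
  have "gT g * gT h - gT h * gT g - emb (brL r g h) \<in> Urels d r"
    unfolding Urels_def using assms by blast
  then show ?thesis
    using Uideal.gen[of _ d r 1 1] by (simp add: modeq_def)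
qed

lemma vT_negative_commute:
  assumes "1 \<le> d" "a < 0" "b < 0" "a' < 0" "b' < 0"
  shows "vT a b * vT a' b' \<approx> vT a' b' * vT a b"
proof -
  let ?g = "V 1 1 (min a b) (max a b)" and ?h = "V 1 1 (min a' b') (max a' b')"
  have "valid_gen d ?g" "valid_gen d ?h"
    using assms unfolding valid_gen_def by auto
  moreover have "brA ?g ?h = 0"
    using assms by (auto simp: sc_0 min_def max_def)
  ultimately have "gT ?g * gT ?h - gT ?h * gT ?g \<approx> 0"
    using bracket_relation[of ?g ?h] by (simp add: brL_eq_brA emb_def)
  then show ?thesis
    using assms by (simp add: vT_negative modeq_def)
qed

lemma commutator_vT:
  fixes m n s t :: int
  assumes "1 \<le> d" "1 \<le> m" "0 \<le> n" "1 \<le> s" "1 \<le> t"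
  shows "vT (- m) n * vT (- s) (- t) - vT (- s) (- t) * vT (- m) n
    \<approx> of_int n * ((if s = n then vT (- m) (- t) else 0) + (if t = n then vT (- m) (- s) else 0))"
proof -
  let ?g = "V 1 1 (- m) n" and ?h = "V 1 1 (min (- s) (- t)) (max (- s) (- t))"
  have valid: "valid_gen d ?g" "valid_gen d ?h"
    using assms unfolding valid_gen_def by auto
  have brA: "brA ?g ?h
      = sc (if n + min (- s) (- t) = 0 then of_int n else 0) (vL 1 1 (- m) (max (- s) (- t)))
      + sc (if n + max (- s) (- t) = 0 then of_int n else 0) (vL 1 1 (- m) (min (- s) (- t)))"
    using assms by (auto simp: sc_0)
  have neg: "- m < 0" "min (- s) (- t) < 0" "max (- s) (- t) < 0"
    using assms by auto
  have no_K: "Poly_Mapping.lookup (brA ?g ?h) K = 0"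
    unfolding brA lookup_add lookup_sc lookup_vL_K[OF neg(1,2)] lookup_vL_K[OF neg(1,3)] by simp
  have "emb (brL r ?g ?h)
      = of_int n * ((if s = n then vT (- m) (- t) else 0) + (if t = n then vT (- m) (- s) else 0))"
    unfolding brL_eq_brA[OF no_K] brA emb_add emb_sc vT_def[symmetric]
    using assms by (auto simp: max_def min_def algebra_simps)
  then show ?thesis
    using bracket_relation[OF valid] assms by (simp add: vT_negative vT_gT)
qed

end

theorem lemma6p2:
  fixes d p :: nat and r :: complex and m n :: int
  assumes "2 \<le> d" and "1 \<le> p" and "1 \<le> m" and "m \<le> int p" and "0 \<le> n" and "m \<noteq> n"
  shows "vT (- m) n * detV p - detV p * vT (- m) n \<in> Uideal d r"
proof -
  interpret enveloping_algebra d r .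
  define G where "G = (\<lambda>q k :: nat. vT (- int q) (- int k))"
  have detV: "detV p = row_det p G"
    by (simp add: detV_def row_det_def row_det_term_def G_def)
  obtain a b :: nat where n: "n = int a" and m: "m = int b"
    using assms(3,5) by (metis nonneg_int_cases zero_le_one order_trans)
  have "vT (- m) n * row_det p G \<approx> row_det p G * vT (- m) n"
  proof (rule row_det_commute_modeq[where c = "of_int n" and a = a and b = b])
    show "of_int n * y = y * of_int n" for y
      by (rule mult_of_int_commute)
  next
    fix q k assume "q \<in> {1..p}" "k \<in> {1..p}"
    then show "vT (- m) n * G q k - G q k * vT (- m) n
        \<approx> of_int n * ((if q = a then G b k else 0) + (if k = a then G q b else 0))"
      using commutator_vT[of m n "int q" "int k"] vT_commute[of "- int q" "- m"] assms
      unfolding G_def m n by auto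
  next
    fix q k q' k' assume "q \<in> {1..p}" "k \<in> {1..p}" "q' \<in> {1..p}" "k' \<in> {1..p}"
    then show "G q k * G q' k' \<approx> G q' k' * G q k"
      unfolding G_def using assms(1) by (intro vT_negative_commute) auto
  qed (use assms m n in auto)
  then show ?thesis
    by (simp add: modeq_def detV)
qed

end
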